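(* Let $G$ be a group and $V$ a normal abelian subgroup of $G$. Suppose that every chain of nested subgroups $H_0<H_1<\dots<H_m$ in $G/V$ has length $m\leqslant l$. Then the $c$-dimension of $G$ is at most $2l$. If moreover $V$ is central in $G$, then the $c$-dimension of $G$ is at most $l$.
   Context: The $c$-dimension of a group $G$ is the maximal length $k$ of a chain of nested centralizers $C_G(Y_0)<C_G(Y_1)<\dots<C_G(Y_k)$ (strict inclusions) of subsets $Y_i\subseteq G$. The length of a chain of subgroups $H_0<\dots<H_m$ (strict inclusions) is $m$. *)

theory Defs
  imports "HOL-Algebra.Algebra" "HOL-Library.Extended_Nat"
begin

definition centralizer :: "('a, 'b) monoid_scheme \<Rightarrow> 'a set \<Rightarrow> 'a set" where
  "centralizer G Y = {g \<in> carrier G. \<forall>y\<in>Y. g \<otimes>\<^bsub>G\<^esub> y = y \<otimes>\<^bsub>G\<^esub> g}"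

definition centralizer_chain :: "('a, 'b) monoid_scheme \<Rightarrow> (nat \<Rightarrow> 'a set) \<Rightarrow> nat \<Rightarrow> bool" where
  "centralizer_chain G Y k \<longleftrightarrow>
     (\<forall>i\<le>k. Y i \<subseteq> carrier G) \<and>
     (\<forall>i<k. centralizer G (Y i) \<subset> centralizer G (Y (Suc i)))"

definition c_dimension :: "('a, 'b) monoid_scheme \<Rightarrow> enat" where
  "c_dimension G = Sup {enat k | k. \<exists>Y. centralizer_chain G Y k}"

definition subgroup_chain :: "('a, 'b) monoid_scheme \<Rightarrow> (nat \<Rightarrow> 'a set) \<Rightarrow> nat \<Rightarrow> bool" where
  "subgroup_chain G H m \<longleftrightarrow>
     (\<forall>i\<le>m. subgroup (H i) G) \<and> (\<forall>i<m. H i \<subset> H (Suc i))"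

end

theory Submission
  imports Defs
begin

text \<open>Write \<open>C\<close> for centralizers and \<open>\<pi>\<close> for the projection \<open>G \<rightarrow> G/V\<close>.
  Along a chain \<open>C(Y\<^sub>0) < \<dots> < C(Y\<^sub>k)\<close> the images \<open>\<pi>(C(Y\<^sub>i))\<close> increase and the images
  \<open>\<pi>(C(C(Y\<^sub>i)))\<close> decrease, so each sequence of subgroups of \<open>G/V\<close> changes at most \<open>l\<close>
  times. If at some step neither changes, then, since \<open>V\<close> is abelian, the double centralizers
  \<open>C(C(Y\<^sub>i)) \<subseteq> C(C(Y\<^sub>i\<^sub>+\<^sub>1))\<close> already agree, and \<open>C(C(C(Y))) = C(Y)\<close> forces
  \<open>C(Y\<^sub>i) = C(Y\<^sub>i\<^sub>+\<^sub>1)\<close>; hence \<open>k \<le> 2l\<close>. If \<open>V\<close> is central it lies in every centralizer,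
  and a subgroup containing \<open>V\<close> is determined by its image in \<open>G/V\<close>, so already the first
  sequence changes at every step and \<open>k \<le> l\<close>.\<close>

lemma centralizer_subset_carrier: "centralizer G Y \<subseteq> carrier G"
  by (auto simp: centralizer_def)

lemma centralizer_antimono: "Y \<subseteq> Y' \<Longrightarrow> centralizer G Y' \<subseteq> centralizer G Y"
  by (auto simp: centralizer_def)

lemma mem_centralizer_singleton:
  "g \<in> centralizer G {h} \<longleftrightarrow> g \<in> carrier G \<and> g \<otimes>\<^bsub>G\<^esub> h = h \<otimes>\<^bsub>G\<^esub> g"
  by (simp add: centralizer_def)

lemma subset_centralizer_centralizer:
  "Y \<subseteq> carrier G \<Longrightarrow> Y \<subseteq> centralizer G (centralizer G Y)"
  by (auto simp: centralizer_def)

lemma centralizer_centralizer_centralizer: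
  assumes "Y \<subseteq> carrier G"
  shows "centralizer G (centralizer G (centralizer G Y)) = centralizer G Y"
proof
  show "centralizer G (centralizer G (centralizer G Y)) \<subseteq> centralizer G Y"
    by (rule centralizer_antimono[OF subset_centralizer_centralizer[OF assms]])
  show "centralizer G Y \<subseteq> centralizer G (centralizer G (centralizer G Y))"
    by (rule subset_centralizer_centralizer[OF centralizer_subset_carrier])
qed

lemma (in group) subgroup_centralizer:
  assumes "Y \<subseteq> carrier G"
  shows "subgroup (centralizer G Y) G"
proof (rule subgroupI)
  show "centralizer G Y \<subseteq> carrier G" by (rule centralizer_subset_carrier)
  show "centralizer G Y \<noteq> {}" using assms by (auto simp: centralizer_def intro!: exI[of _ \<one>])
next
  fix a assume a: "a \<in> centralizer G Y"
  have "inv a \<otimes> y = y \<otimes> inv a" if y: "y \<in> Y" for y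
  proof -
    have ac: "a \<in> carrier G" and yc: "y \<in> carrier G" and "a \<otimes> y = y \<otimes> a"
      using a y assms by (auto simp: centralizer_def)
    have "y \<otimes> inv a = inv a \<otimes> (a \<otimes> y) \<otimes> inv a"
      using ac yc by (simp add: m_assoc[symmetric])
    also have "\<dots> = inv a \<otimes> (y \<otimes> a) \<otimes> inv a" using \<open>a \<otimes> y = y \<otimes> a\<close> by simp
    also have "\<dots> = inv a \<otimes> y" using ac yc by (simp add: m_assoc)
    finally show ?thesis by simp
  qed
  with a show "inv a \<in> centralizer G Y" by (auto simp: centralizer_def)
next
  fix a b assume a: "a \<in> centralizer G Y" and b: "b \<in> centralizer G Y"
  have "a \<otimes> b \<otimes> y = y \<otimes> (a \<otimes> b)" if y: "y \<in> Y" for y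
  proof -
    have ac: "a \<in> carrier G" and bc: "b \<in> carrier G" and yc: "y \<in> carrier G"
      and "a \<otimes> y = y \<otimes> a" and "b \<otimes> y = y \<otimes> b"
      using a b y assms by (auto simp: centralizer_def)
    then show ?thesis by (metis m_assoc)
  qed
  with a b show "a \<otimes> b \<in> centralizer G Y" by (auto simp: centralizer_def)
qed

lemma (in group) rcos_image_factor:
  assumes "subgroup H G" and "a \<in> carrier G" and "H #> a \<in> (#>) H ` S"
  obtains h s where "h \<in> H" "s \<in> S" "a = h \<otimes> s"
proof -
  from assms(3) obtain s where s: "s \<in> S" "H #> a = H #> s" by auto
  then have "a \<in> H #> s" using rcos_self[OF assms(2,1)] by simp
  then obtain h where "h \<in> H" "a = h \<otimes> s" unfolding r_coset_def by auto
  with s(1) show thesis using that by blast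
qed

lemma (in group) subset_of_rcos_image_subset:
  assumes "subgroup H G" "subgroup K G" "subgroup L G" "H \<subseteq> K"
    and "(#>) H ` L \<subseteq> (#>) H ` K"
  shows "L \<subseteq> K"
proof
  fix c assume c: "c \<in> L"
  then have "c \<in> carrier G" using subgroup.subset[OF assms(3)] by auto
  moreover have "H #> c \<in> (#>) H ` K" using assms(5) c by auto
  ultimately obtain h s where "h \<in> H" "s \<in> K" "c = h \<otimes> s"
    by (rule rcos_image_factor[OF assms(1)])
  then show "c \<in> K" using assms(4) subgroup.m_closed[OF assms(2)] by auto
qed

text \<open>If \<open>z = w z'\<close> with \<open>w \<in> H\<close>, \<open>z \<in> C(A)\<close>, \<open>z' \<in> C(B) \<subseteq> C(A)\<close>, then \<open>w \<in> C(A)\<close>; as \<open>H\<close> is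
  abelian, \<open>w\<close> then centralizes every \<open>c = v c'\<close> with \<open>v \<in> H\<close>, \<open>c' \<in> A\<close>, hence all of \<open>B\<close>.\<close>

lemma (in group) centralizer_subset_of_rcos_images:
  assumes H: "subgroup H G" and H_comm: "\<forall>x\<in>H. \<forall>y\<in>H. x \<otimes> y = y \<otimes> x"
    and AB: "A \<subseteq> B" and B: "B \<subseteq> carrier G"
    and B_image: "(#>) H ` B \<subseteq> (#>) H ` A"
    and C_image: "(#>) H ` centralizer G A \<subseteq> (#>) H ` centralizer G B"
  shows "centralizer G A \<subseteq> centralizer G B"
proof
  have HG: "H \<subseteq> carrier G" by (rule subgroup.subset[OF H])
  have CA: "subgroup (centralizer G A) G"
    using subgroup_centralizer AB B by blast
  have C1: "subgroup (centralizer G {g}) G" if "g \<in> carrier G" for g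
    using subgroup_centralizer that by blast
  fix z assume z: "z \<in> centralizer G A"
  then have zc: "z \<in> carrier G" by (simp add: centralizer_def)
  have "H #> z \<in> (#>) H ` centralizer G B" using C_image z by blast
  then obtain w z' where w: "w \<in> H" and z': "z' \<in> centralizer G B" and z_eq: "z = w \<otimes> z'"
    by (rule rcos_image_factor[OF H zc])
  have z'c: "z' \<in> carrier G" using z' by (simp add: centralizer_def)
  have wc: "w \<in> carrier G" using w HG by blast
  have "z' \<in> centralizer G A" using z' centralizer_antimono[OF AB] by blast
  then have "z \<otimes> inv z' \<in> centralizer G A"
    using z subgroup.m_closed[OF CA] subgroup.m_inv_closed[OF CA] by blast
  moreover have "z \<otimes> inv z' = w" using z_eq wc z'c by (simp add: m_assoc)
  ultimately have wA: "w \<in> centralizer G A" by simp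
  have "z \<in> centralizer G {c}" if c: "c \<in> B" for c
  proof -
    have cc: "c \<in> carrier G" using c B by blast
    have "H #> c \<in> (#>) H ` A" using B_image c by blast
    then obtain v c' where v: "v \<in> H" and c': "c' \<in> A" and c_eq: "c = v \<otimes> c'"
      by (rule rcos_image_factor[OF H cc])
    have "v \<in> centralizer G {w}" using v w H_comm HG by (auto simp: mem_centralizer_singleton)
    moreover have "c' \<in> centralizer G {w}"
      using wA c' AB B by (auto simp: centralizer_def)
    ultimately have "c \<in> centralizer G {w}" using c_eq subgroup.m_closed[OF C1[OF wc]] by simp
    then have "w \<in> centralizer G {c}" using wc by (simp add: mem_centralizer_singleton)
    moreover have "z' \<in> centralizer G {c}" using z' c by (simp add: centralizer_def)
    ultimately show ?thesis using z_eq subgroup.m_closed[OF C1[OF cc]] by simp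
  qed
  then show "z \<in> centralizer G B" using zc by (auto simp: centralizer_def)
qed

definition jumps :: "(nat \<Rightarrow> 'a) \<Rightarrow> nat \<Rightarrow> nat set" where
  "jumps f k = {i. i < k \<and> f i \<noteq> f (Suc i)}"

lemma finite_jumps: "finite (jumps f k)"
  by (simp add: jumps_def)

lemma jumps_Suc: "jumps f (Suc k) = (if f k = f (Suc k) then jumps f k else insert k (jumps f k))"
  by (auto simp: jumps_def less_Suc_eq)

lemma card_jumps_reverse: "card (jumps (\<lambda>i. f (k - i)) k) = card (jumps f k)"
proof -
  have "jumps (\<lambda>i. f (k - i)) k = (\<lambda>i. k - Suc i) ` jumps f k"
  proof (intro equalityI subsetI)
    fix i assume "i \<in> jumps (\<lambda>i. f (k - i)) k"
    then have "k - Suc i \<in> jumps f k" and "i = k - Suc (k - Suc i)"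
      by (auto simp: jumps_def Suc_diff_Suc)
    then show "i \<in> (\<lambda>i. k - Suc i) ` jumps f k" by blast
  qed (auto simp: jumps_def Suc_diff_Suc)
  moreover have "inj_on (\<lambda>i. k - Suc i) (jumps f k)" by (auto simp: inj_on_def jumps_def)
  ultimately show ?thesis by (simp add: card_image)
qed

lemma subgroup_chain_of_mono:
  assumes "\<forall>i\<le>k. subgroup (f i) Q" and "\<forall>i<k. f i \<subseteq> f (Suc i)"
  shows "\<exists>H. subgroup_chain Q H (card (jumps f k)) \<and> H (card (jumps f k)) = f k"
  using assms
proof (induction k)
  case 0
  show ?case using 0 by (intro exI[of _ "\<lambda>_. f 0"]) (simp add: subgroup_chain_def jumps_def)
next
  case (Suc k)
  define m where "m = card (jumps f k)"
  from Suc obtain H where H: "subgroup_chain Q H m" "H m = f k" unfolding m_def by auto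
  show ?case
  proof (cases "f k = f (Suc k)")
    case True
    with H show ?thesis by (auto simp: jumps_Suc m_def)
  next
    case False
    have card: "card (jumps f (Suc k)) = Suc m"
    proof -
      have "k \<notin> jumps f k" by (simp add: jumps_def)
      with False show ?thesis by (simp add: jumps_Suc m_def finite_jumps)
    qed
    define H' where "H' = H(Suc m := f (Suc k))"
    have "subgroup_chain Q H' (Suc m)"
      unfolding subgroup_chain_def
    proof (intro conjI allI impI)
      fix i assume "i \<le> Suc m"
      then show "subgroup (H' i) Q"
        using H Suc.prems(1) unfolding H'_def subgroup_chain_def by (cases "i = Suc m") auto
    next
      fix i assume "i < Suc m"
      then show "H' i \<subset> H' (Suc i)"
        using H False Suc.prems(2) unfolding H'_def subgroup_chain_def
        by (cases "i = m") auto
    qed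
    with card show ?thesis unfolding H'_def by auto
  qed
qed

lemma card_jumps_le_of_mono:
  assumes "\<forall>H m. subgroup_chain Q H m \<longrightarrow> m \<le> l"
    and "\<forall>i\<le>k. subgroup (f i) Q" and "\<forall>i<k. f i \<subseteq> f (Suc i)"
  shows "card (jumps f k) \<le> l"
  using subgroup_chain_of_mono[OF assms(2,3)] assms(1) by blast

lemma card_jumps_le_of_antimono:
  assumes "\<forall>H m. subgroup_chain Q H m \<longrightarrow> m \<le> l"
    and "\<forall>i\<le>k. subgroup (f i) Q" and "\<forall>i<k. f (Suc i) \<subseteq> f i"
  shows "card (jumps f k) \<le> l"
proof -
  have "\<forall>i<k. f (k - i) \<subseteq> f (k - Suc i)"
  proof (intro allI impI)
    fix i assume "i < k"
    then have "k - i = Suc (k - Suc i)" and "k - Suc i < k" by arith+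
    with assms(3) show "f (k - i) \<subseteq> f (k - Suc i)" by simp
  qed
  then have "card (jumps (\<lambda>i. f (k - i)) k) \<le> l"
    using assms(1,2) by (intro card_jumps_le_of_mono) auto
  then show ?thesis by (simp add: card_jumps_reverse)
qed

lemma c_dimension_le_iff:
  "c_dimension G \<le> enat n \<longleftrightarrow> (\<forall>Y k. centralizer_chain G Y k \<longrightarrow> k \<le> n)"
  unfolding c_dimension_def by (auto simp: Sup_le_iff) (metis enat_ord_simps(1))

lemma (in normal) subgroup_rcos_image:
  assumes "subgroup K G"
  shows "subgroup ((#>) H ` K) (G Mod H)"
proof -
  have "group_hom G (G Mod H) ((#>) H)"
    by (simp add: group_hom_def group_hom_axioms_def is_group factorgroup_is_group r_coset_hom_Mod)
  then show ?thesis using assms by (rule group_hom.subgroup_img_is_subgroup)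
qed

lemma (in normal) card_jumps_rcos_images_le_of_mono:
  assumes "\<forall>S m. subgroup_chain (G Mod H) S m \<longrightarrow> m \<le> l"
    and "\<forall>i\<le>k. subgroup (K i) G" and "\<forall>i<k. K i \<subseteq> K (Suc i)"
  shows "card (jumps (\<lambda>i. (#>) H ` K i) k) \<le> l"
proof (rule card_jumps_le_of_mono[OF assms(1)])
  show "\<forall>i\<le>k. subgroup ((#>) H ` K i) (G Mod H)" using assms(2) subgroup_rcos_image by blast
  show "\<forall>i<k. (#>) H ` K i \<subseteq> (#>) H ` K (Suc i)" using assms(3) by (simp add: image_mono)
qed

lemma (in normal) card_jumps_rcos_images_le_of_antimono:
  assumes "\<forall>S m. subgroup_chain (G Mod H) S m \<longrightarrow> m \<le> l"
    and "\<forall>i\<le>k. subgroup (K i) G" and "\<forall>i<k. K (Suc i) \<subseteq> K i"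
  shows "card (jumps (\<lambda>i. (#>) H ` K i) k) \<le> l"
proof (rule card_jumps_le_of_antimono[OF assms(1)])
  show "\<forall>i\<le>k. subgroup ((#>) H ` K i) (G Mod H)" using assms(2) subgroup_rcos_image by blast
  show "\<forall>i<k. (#>) H ` K (Suc i) \<subseteq> (#>) H ` K i" using assms(3) by (simp add: image_mono)
qed

lemma (in normal) centralizer_chain_length_le:
  assumes comm: "\<forall>x\<in>H. \<forall>y\<in>H. x \<otimes> y = y \<otimes> x"
    and bound: "\<forall>S m. subgroup_chain (G Mod H) S m \<longrightarrow> m \<le> l"
    and chain: "centralizer_chain G Y k"
  shows "k \<le> 2 * l"
proof -
  define C where "C i = centralizer G (Y i)" for i
  define up where "up = jumps (\<lambda>i. (#>) H ` C i) k"
  define down where "down = jumps (\<lambda>i. (#>) H ` centralizer G (C i)) k"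
  have Y: "\<forall>i\<le>k. Y i \<subseteq> carrier G" and C_strict: "\<forall>i<k. C i \<subset> C (Suc i)"
    using chain by (simp_all add: centralizer_chain_def C_def)
  have C_carrier: "C i \<subseteq> carrier G" for i by (simp add: C_def centralizer_subset_carrier)
  have "\<forall>i\<le>k. subgroup (C i) G" using Y by (simp add: C_def subgroup_centralizer)
  moreover have "\<forall>i<k. C i \<subseteq> C (Suc i)" using C_strict by blast
  ultimately have up_le: "card up \<le> l"
    unfolding up_def by (rule card_jumps_rcos_images_le_of_mono[OF bound])
  have "\<forall>i\<le>k. subgroup (centralizer G (C i)) G"
    by (simp add: subgroup_centralizer[OF C_carrier])
  moreover have "\<forall>i<k. centralizer G (C (Suc i)) \<subseteq> centralizer G (C i)"
    using C_strict by (simp add: centralizer_antimono less_imp_le)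
  ultimately have down_le: "card down \<le> l"
    unfolding down_def by (rule card_jumps_rcos_images_le_of_antimono[OF bound])
  have cover: "{..<k} \<subseteq> up \<union> down"
  proof (rule subsetI, rule ccontr)
    fix i assume "i \<in> {..<k}" and "i \<notin> up \<union> down"
    then have i: "i < k" and "(#>) H ` C i = (#>) H ` C (Suc i)"
      and "(#>) H ` centralizer G (C i) = (#>) H ` centralizer G (C (Suc i))"
      by (auto simp: up_def down_def jumps_def)
    then have "centralizer G (C i) \<subseteq> centralizer G (C (Suc i))"
      using C_strict i C_carrier
      by (intro centralizer_subset_of_rcos_images[OF subgroup_axioms comm]) (simp_all add: less_imp_le)
    then have "centralizer G (centralizer G (C (Suc i))) \<subseteq> centralizer G (centralizer G (C i))"
      by (rule centralizer_antimono)
    then have "C (Suc i) \<subseteq> C i"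
      using Y i by (simp add: C_def centralizer_centralizer_centralizer)
    with C_strict i show False by blast
  qed
  have "k = card {..<k}" by simp
  also have "\<dots> \<le> card (up \<union> down)"
    by (rule card_mono[OF _ cover]) (simp add: up_def down_def finite_jumps)
  also have "\<dots> \<le> card up + card down" by (rule card_Un_le)
  also have "\<dots> \<le> 2 * l" using up_le down_le by simp
  finally show ?thesis .
qed

lemma (in normal) centralizer_chain_length_le_of_central:
  assumes central: "H \<subseteq> centralizer G (carrier G)"
    and bound: "\<forall>S m. subgroup_chain (G Mod H) S m \<longrightarrow> m \<le> l"
    and chain: "centralizer_chain G Y k"
  shows "k \<le> l"
proof -
  define C where "C i = centralizer G (Y i)" for i
  have Y: "\<forall>i\<le>k. Y i \<subseteq> carrier G" and C_strict: "\<forall>i<k. C i \<subset> C (Suc i)"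
    using chain by (simp_all add: centralizer_chain_def C_def)
  have C_sub: "\<forall>i\<le>k. subgroup (C i) G" using Y by (simp add: C_def subgroup_centralizer)
  have C_mono: "\<forall>i<k. C i \<subseteq> C (Suc i)" using C_strict by blast
  have "jumps (\<lambda>i. (#>) H ` C i) k = {..<k}"
  proof (rule ccontr)
    assume "jumps (\<lambda>i. (#>) H ` C i) k \<noteq> {..<k}"
    then obtain i where i: "i < k" and same_image: "(#>) H ` C i = (#>) H ` C (Suc i)"
      by (auto simp: jumps_def)
    have "subgroup (C i) G" "subgroup (C (Suc i)) G" using C_sub i by simp_all
    moreover have "H \<subseteq> C i"
      unfolding C_def using Y i by (intro order_trans[OF central centralizer_antimono]) simp
    moreover have "(#>) H ` C (Suc i) \<subseteq> (#>) H ` C i" using same_image by simp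
    ultimately have "C (Suc i) \<subseteq> C i"
      by (rule subset_of_rcos_image_subset[OF subgroup_axioms])
    with C_strict i show False by blast
  qed
  with card_jumps_rcos_images_le_of_mono[OF bound C_sub C_mono] show ?thesis by simp
qed

theorem lemma2:
  fixes G :: "('a, 'b) monoid_scheme" and V :: "'a set" and l :: nat
  assumes "group G"
    and "V \<lhd> G"
    and "\<forall>x\<in>V. \<forall>y\<in>V. x \<otimes>\<^bsub>G\<^esub> y = y \<otimes>\<^bsub>G\<^esub> x"
    and "\<forall>H m. subgroup_chain (G Mod V) H m \<longrightarrow> m \<le> l"
  shows "c_dimension G \<le> enat (2 * l) \<and>
         (V \<subseteq> centralizer G (carrier G) \<longrightarrow> c_dimension G \<le> enat l)"
proof -
  interpret normal V G by (rule assms(2))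
  show ?thesis
    using centralizer_chain_length_le[OF assms(3,4)]
      centralizer_chain_length_le_of_central[OF _ assms(4)]
    by (simp add: c_dimension_le_iff)
qed

end
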